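(* Let $g(x;\theta)$ be a family of densities in the class $\mathcal{G}$ with $g(x;0)=\alpha x^{-\alpha-1}$, and let $h(x)=\frac{\partial}{\partial\theta}g(x;\theta)\big|_{\theta=0}$. Suppose the Kullback–Leibler information $$K(\theta)=\inf_{\lambda>0}\int_1^\infty \ln\frac{g(x;\theta)}{\lambda x^{-\lambda-1}}\,g(x;\theta)\,dx$$ is well defined. Then, as $\theta\to0$, $$2K(\theta)=\theta^2\left(\int_1^\infty \frac{x^{\alpha+1}}{\alpha}h^2(x)\,dx-\left(\int_1^\infty \alpha h(x)\ln x\,dx\right)^2\right)+o(\theta^2).$$
   Context: $\mathcal{G}$ is a class of families of densities $g(x;\theta)$ on $[1,\infty)$, $\theta$ in a neighbourhood of $0$, with $g(x;0)$ a Pareto density $\alpha x^{-\alpha-1}$ ($\alpha>0$), such that differentiation in $\theta$ under the integral sign is permitted in all integrals appearing. *)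

theory Defs
  imports "HOL-Analysis.Analysis" "HOL-Library.Landau_Symbols"
begin

definition int1 :: "(real \<Rightarrow> real) \<Rightarrow> real" where
  "int1 f = (LINT x:{1..}|lborel. f x)"

definition diff_under_int ::
  "(real \<Rightarrow> real \<Rightarrow> real) \<Rightarrow> (real \<Rightarrow> real \<Rightarrow> real) \<Rightarrow> real set \<Rightarrow> bool" where
  "diff_under_int \<phi> \<phi>' U \<longleftrightarrow>
     (\<forall>t\<in>U. set_integrable lborel {1..} (\<lambda>x. \<phi> x t)
          \<and> set_integrable lborel {1..} (\<lambda>x. \<phi>' x t)
          \<and> (\<forall>x\<ge>1. ((\<lambda>s. \<phi> x s) has_real_derivative \<phi>' x t) (at t))
          \<and> ((\<lambda>s. int1 (\<lambda>x. \<phi> x s)) has_real_derivative int1 (\<lambda>x. \<phi>' x t)) (at t))"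

text \<open>Integrand of the KL information between g(.;t) and the Pareto density
  with index l, and its first and second t-derivatives.\<close>
definition kl_integrand :: "(real \<Rightarrow> real \<Rightarrow> real) \<Rightarrow> real \<Rightarrow> real \<Rightarrow> real \<Rightarrow> real" where
  "kl_integrand g l x t = ln (g x t / (l * x powr (-l-1))) * g x t"

definition kl_integrand_d1 ::
  "(real \<Rightarrow> real \<Rightarrow> real) \<Rightarrow> (real \<Rightarrow> real \<Rightarrow> real) \<Rightarrow> real \<Rightarrow> real \<Rightarrow> real \<Rightarrow> real" where
  "kl_integrand_d1 g g1 l x t = g1 x t * (ln (g x t / (l * x powr (-l-1))) + 1)"

definition kl_integrand_d2 ::
  "(real \<Rightarrow> real \<Rightarrow> real) \<Rightarrow> (real \<Rightarrow> real \<Rightarrow> real) \<Rightarrow> (real \<Rightarrow> real \<Rightarrow> real)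
     \<Rightarrow> real \<Rightarrow> real \<Rightarrow> real \<Rightarrow> real" where
  "kl_integrand_d2 g g1 g2 l x t =
     g2 x t * (ln (g x t / (l * x powr (-l-1))) + 1) + (g1 x t)^2 / g x t"

definition KL :: "(real \<Rightarrow> real \<Rightarrow> real) \<Rightarrow> real \<Rightarrow> real" where
  "KL g t = Inf {int1 (\<lambda>x. kl_integrand g l x t) | l. l > 0}"

end

theory Submission
  imports Defs "HOL-Real_Asymp.Real_Asymp"
begin

(*
  Comparing g(.;t) with the Pareto density of index l, the logarithm of the density ratio is
  affine in ln x, so the KL integral splits as
    kl(l,t) = kl(alpha,t) - ln (l/alpha) + (l - alpha) * m(t),   m(t) = int g(x;t) ln x dx.
  Hence the infimum over l is attained at l = 1/m(t) and equals
    K(t) = kl(alpha,t) + ln N(t) + 1 - N(t),   N = alpha * m.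
  At t = 0 we have kl(alpha,0) = 0, d/dt kl(alpha,0) = int h = 0, d^2/dt^2 kl(alpha,0) =
  int h^2/g (the Fisher term), N(0) = 1 and N'(0) = int alpha h ln x; since
  ln N + 1 - N = -(N - 1)^2/2 + o((N - 1)^2), Taylor's formula with Peano remainder gives
  K''(0) = int h^2/g - N'(0)^2. Neither the integrability of g ln x nor the
  differentiability of N is assumed: both follow from the splitting at l = alpha and l = 2 alpha.
*)

lemma taylor_peano_second_order:
  fixes f f' :: "real \<Rightarrow> real"
  assumes f': "\<forall>\<^sub>F t in nhds 0. (f has_real_derivative f' t) (at t)"
    and f'': "(f' has_real_derivative c) (at 0)"
  shows "(\<lambda>t. f t - f 0 - f' 0 * t - c / 2 * t^2) \<in> o[at 0](\<lambda>t. t^2)"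
proof (rule landau_o.smallI)
  fix e :: real assume "e > 0"
  define \<phi> where "\<phi> t = f t - f 0 - f' 0 * t - c / 2 * t^2" for t
  have "((\<lambda>s. (f' s - f' 0) / s) \<longlongrightarrow> c) (at 0)"
    using f'' by (simp add: has_field_derivative_iff)
  then have "\<forall>\<^sub>F s in at 0. \<bar>(f' s - f' 0) / s - c\<bar> < e"
    using \<open>e > 0\<close> by (auto dest: tendstoD simp: dist_real_def)
  then have "\<forall>\<^sub>F s in nhds 0. \<bar>f' s - f' 0 - c * s\<bar> \<le> e * \<bar>s\<bar>"
    unfolding eventually_at_filter
  proof eventually_elim
    case (elim s)
    show ?case
    proof (cases "s = 0")
      case False
      have "\<bar>f' s - f' 0 - c * s\<bar> = \<bar>(f' s - f' 0) / s - c\<bar> * \<bar>s\<bar>"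
        using False by (simp add: abs_mult[symmetric] field_simps)
      with elim False show ?thesis by (simp add: mult_right_mono)
    qed simp
  qed
  with f' have "\<forall>\<^sub>F s in nhds 0. (\<phi> has_real_derivative f' s - f' 0 - c * s) (at s)
      \<and> \<bar>f' s - f' 0 - c * s\<bar> \<le> e * \<bar>s\<bar>"
    unfolding \<phi>_def by eventually_elim (auto intro!: derivative_eq_intros)
  then obtain r where "r > 0" and r: "\<And>s. \<bar>s\<bar> < r \<Longrightarrow>
      (\<phi> has_real_derivative f' s - f' 0 - c * s) (at s) \<and> \<bar>f' s - f' 0 - c * s\<bar> \<le> e * \<bar>s\<bar>"
    unfolding eventually_nhds_metric dist_real_def by auto
  have "\<bar>\<phi> t\<bar> \<le> e * t^2" if "\<bar>t\<bar> < r" for t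
  proof -
    have "norm (\<phi> t - \<phi> 0) \<le> e * \<bar>t\<bar> * norm (t - 0)"
    proof (rule field_differentiable_bound[of "cball 0 \<bar>t\<bar>"])
      fix s :: real assume "s \<in> cball 0 \<bar>t\<bar>"
      then have "\<bar>s\<bar> \<le> \<bar>t\<bar>" by simp
      with that r[of s] \<open>e > 0\<close> show
        "(\<phi> has_real_derivative f' s - f' 0 - c * s) (at s within cball 0 \<bar>t\<bar>)"
        "norm (f' s - f' 0 - c * s) \<le> e * \<bar>t\<bar>"
        by (auto intro: has_field_derivative_at_within order_trans mult_left_mono)
    qed auto
    then show ?thesis by (simp add: \<phi>_def power2_eq_square abs_mult)
  qed
  moreover have "\<forall>\<^sub>F t in at 0. \<bar>t\<bar> < r"
    using \<open>r > 0\<close> by (auto simp: eventually_at dist_real_def)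
  ultimately show "\<forall>\<^sub>F t in at 0. norm (f t - f 0 - f' 0 * t - c / 2 * t^2) \<le> e * norm (t^2)"
    by (auto elim!: eventually_mono simp: \<phi>_def)
qed

lemma ln_profile_second_order:
  fixes A A' N N' :: "real \<Rightarrow> real"
  assumes A': "\<forall>\<^sub>F t in nhds 0. (A has_real_derivative A' t) (at t)"
    and A'': "(A' has_real_derivative a2) (at 0)"
    and N': "\<forall>\<^sub>F t in nhds 0. (N has_real_derivative N' t) (at t)"
    and N'': "(N' has_real_derivative n2) (at 0)"
    and "A 0 = 0" "A' 0 = 0" "N 0 = 1"
  shows "(\<lambda>t. A t + ln (N t) + 1 - N t - (a2 - (N' 0)^2) / 2 * t^2) \<in> o[at 0](\<lambda>t. t^2)"
proof -
  define K where "K t = A t + ln (N t) + 1 - N t" for t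
  define K' where "K' t = A' t + N' t / N t - N' t" for t
  have "isCont N 0"
    using N' by (auto dest: eventually_nhds_x_imp_x DERIV_isCont)
  then have "\<forall>\<^sub>F t in nhds 0. N t > 0"
    using \<open>N 0 = 1\<close> by (auto simp: isCont_def eventually_nhds_conv_at dest: order_tendstoD(1)[of _ _ _ 0])
  with A' N' have "\<forall>\<^sub>F t in nhds 0. (K has_real_derivative K' t) (at t)"
    unfolding K_def K'_def by eventually_elim (auto intro!: derivative_eq_intros simp: field_simps)
  moreover have "(K' has_real_derivative a2 - (N' 0)^2) (at 0)"
    unfolding K'_def using A'' N'' eventually_nhds_x_imp_x[OF N'] \<open>N 0 = 1\<close>
    by (auto intro!: derivative_eq_intros simp: power2_eq_square)
  ultimately have "(\<lambda>t. K t - K 0 - K' 0 * t - (a2 - (N' 0)^2) / 2 * t^2) \<in> o[at 0](\<lambda>t. t^2)"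
    by (rule taylor_peano_second_order)
  then show ?thesis
    using assms(5-7) by (simp add: K_def K'_def)
qed

lemma Inf_neg_ln_plus_linear:
  fixes a c m :: real
  assumes "a > 0" "m > 0"
  shows "Inf {c - ln (l / a) + (l / a - 1) * m | l. l > 0} = c + ln m + 1 - m"
proof (rule cInf_eq_minimum)
  show "c + ln m + 1 - m \<in> {c - ln (l / a) + (l / a - 1) * m | l. l > 0}"
    using assms by (intro CollectI exI[of _ "a / m"]) (auto simp: ln_div field_simps)
next
  fix y assume "y \<in> {c - ln (l / a) + (l / a - 1) * m | l. l > 0}"
  then obtain l where "l > 0" and y: "y = c - ln (l / a) + (l / a - 1) * m" by auto
  have "ln (l / a) + ln m \<le> l / a * m - 1"
    using ln_le_minus_one[of "l / a * m"] ln_mult[of "l / a" m] \<open>l > 0\<close> assms by simp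
  then show "c + ln m + 1 - m \<le> y"
    using \<open>l > 0\<close> assms by (simp add: y ln_mult algebra_simps)
qed

lemma int1_lincomb:
  fixes u v w :: "real \<Rightarrow> real"
  assumes u: "set_integrable lborel {1..} u" and v: "set_integrable lborel {1..} v"
    and w: "\<And>x. x \<ge> 1 \<Longrightarrow> w x = a * u x + b * v x"
  shows "set_integrable lborel {1..} w" and "int1 w = a * int1 u + b * int1 v"
proof -
  have "set_integrable lborel {1..} (\<lambda>x. a * u x + b * v x)"
    using u v by (intro set_integral_add set_integrable_mult_right)
  then show "set_integrable lborel {1..} w"
    by (rule set_integrable_cong[THEN iffD1, rotated -1]) (auto simp: w)
  have "int1 w = int1 (\<lambda>x. a * u x + b * v x)"
    unfolding int1_def by (rule set_lebesgue_integral_cong) (auto simp: w)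
  also have "\<dots> = a * int1 u + b * int1 v"
    unfolding int1_def using u v by simp
  finally show "int1 w = a * int1 u + b * int1 v" .
qed

lemma int1_pareto_ln:
  fixes a :: real
  assumes "a > 0"
  shows "int1 (\<lambda>x. a * x powr (-a-1) * ln x) = 1 / a"
proof -
  define F where "F x = - (x powr (-a)) * ln x - x powr (-a) / a" for x :: real
  have F': "(F has_real_derivative a * x powr (-a-1) * ln x) (at x)" if "x > 0" for x
  proof -
    have "x powr (-a) / x = x powr (-a-1)"
      using that by (simp add: powr_diff)
    then show ?thesis
      unfolding F_def using that \<open>a > 0\<close>
      by (auto intro!: derivative_eq_intros simp: field_simps)
  qed
  have at_1: "(F \<longlongrightarrow> F 1) (at_right 1)"
    unfolding F_def using \<open>a > 0\<close> by (intro tendsto_intros) auto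
  have at_top: "(F \<longlongrightarrow> 0) at_top"
    unfolding F_def using \<open>a > 0\<close> by real_asymp
  have "int1 (\<lambda>x. a * x powr (-a-1) * ln x) = (LBINT x:{1<..}. a * x powr (-a-1) * ln x)"
    unfolding int1_def
    by (rule set_integral_cong_set) (auto simp: set_borel_measurable_def intro!: AE_I[where N="{1}"])
  also have "\<dots> = (LBINT x=ereal 1..\<infinity>. a * x powr (-a-1) * ln x)"
    by (subst interval_integral_Ioi) auto
  also have "\<dots> = 0 - F 1"
    using F' at_1 at_top \<open>a > 0\<close>
    by (intro interval_integral_FTC_nonneg(2)) (auto simp: ereal_tendsto_simps1 intro!: continuous_intros)
  finally show ?thesis
    using \<open>a > 0\<close> by (simp add: F_def)
qed

lemma ln_pareto_ratio_shift:
  fixes a l x y :: real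
  assumes "a > 0" "l > 0" "x > 0" "y > 0"
  shows "ln (y / (l * x powr (-l-1))) = ln (y / (a * x powr (-a-1))) - ln (l / a) + (l - a) * ln x"
  using assms by (simp add: ln_div ln_mult ln_powr algebra_simps)

lemma int1_pareto_shift:
  fixes \<Phi> :: "real \<Rightarrow> real \<Rightarrow> real" and u :: "real \<Rightarrow> real"
  assumes "a > 0"
    and \<Phi>_int: "\<And>l. l > 0 \<Longrightarrow> set_integrable lborel {1..} (\<Phi> l)"
    and u_int: "set_integrable lborel {1..} u"
    and \<Phi>_shift: "\<And>l x. l > 0 \<Longrightarrow> x \<ge> 1 \<Longrightarrow> \<Phi> l x = \<Phi> a x - ln (l / a) * u x + (l - a) * (u x * ln x)"
  shows "set_integrable lborel {1..} (\<lambda>x. u x * ln x)"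
    and "l > 0 \<Longrightarrow> int1 (\<Phi> l) = int1 (\<Phi> a) - ln (l / a) * int1 u + (l - a) * int1 (\<lambda>x. u x * ln x)"
proof -
  have "set_integrable lborel {1..} (\<lambda>x. \<Phi> (2 * a) x - \<Phi> a x)"
    using \<Phi>_int \<open>a > 0\<close> by (intro set_integral_diff) auto
  then show ln_int: "set_integrable lborel {1..} (\<lambda>x. u x * ln x)"
    by (rule int1_lincomb(1)[where a = "1 / a" and b = "ln 2 / a", OF _ u_int])
      (use \<open>a > 0\<close> \<Phi>_shift[of "2 * a"] in \<open>auto simp: field_simps\<close>)
  assume "l > 0"
  have "int1 (\<lambda>x. \<Phi> l x - \<Phi> a x) = - ln (l / a) * int1 u + (l - a) * int1 (\<lambda>x. u x * ln x)"
    by (rule int1_lincomb(2)[OF u_int ln_int]) (use \<Phi>_shift \<open>l > 0\<close> in auto)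
  moreover have "int1 (\<lambda>x. \<Phi> l x - \<Phi> a x) = int1 (\<Phi> l) - int1 (\<Phi> a)"
    unfolding int1_def using \<Phi>_int \<open>l > 0\<close> \<open>a > 0\<close> by (simp add: set_integral_diff(2))
  ultimately show "int1 (\<Phi> l) = int1 (\<Phi> a) - ln (l / a) * int1 u + (l - a) * int1 (\<lambda>x. u x * ln x)"
    by simp
qed

locale pareto_perturbation =
  fixes g g1 g2 :: "real \<Rightarrow> real \<Rightarrow> real" and h :: "real \<Rightarrow> real" and \<alpha> \<delta> :: real
  assumes alpha_pos: "\<alpha> > 0" and delta_pos: "\<delta> > 0"
    and g_pos: "\<forall>t\<in>ball 0 \<delta>. \<forall>x\<ge>1. g x t > 0"
    and g_density: "\<forall>t\<in>ball 0 \<delta>. set_integrable lborel {1..} (\<lambda>x. g x t) \<and> int1 (\<lambda>x. g x t) = 1"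
    and g_pareto: "\<forall>x\<ge>1. g x 0 = \<alpha> * x powr (-\<alpha>-1)"
    and g1_deriv: "\<forall>t\<in>ball 0 \<delta>. \<forall>x\<ge>1. ((\<lambda>s. g x s) has_real_derivative g1 x t) (at t)"
    and h_def: "\<forall>x\<ge>1. ((\<lambda>s. g x s) has_real_derivative h x) (at 0)"
    and dui_g: "diff_under_int g g1 (ball 0 \<delta>)"
    and dui_g1: "diff_under_int g1 g2 (ball 0 \<delta>)"
    and dui_kl: "\<forall>l>0. diff_under_int (kl_integrand g l) (kl_integrand_d1 g g1 l) (ball 0 \<delta>)"
    and dui_kl1: "\<forall>l>0. diff_under_int (kl_integrand_d1 g g1 l) (kl_integrand_d2 g g1 g2 l) (ball 0 \<delta>)"
begin

definition kl_div :: "real \<Rightarrow> real \<Rightarrow> real" where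
  "kl_div l t = int1 (\<lambda>x. kl_integrand g l x t)"

definition kl_div_d1 :: "real \<Rightarrow> real \<Rightarrow> real" where
  "kl_div_d1 l t = int1 (\<lambda>x. kl_integrand_d1 g g1 l x t)"

definition kl_div_d2 :: "real \<Rightarrow> real \<Rightarrow> real" where
  "kl_div_d2 l t = int1 (\<lambda>x. kl_integrand_d2 g g1 g2 l x t)"

definition mean_log :: "real \<Rightarrow> real" where
  "mean_log t = int1 (\<lambda>x. g x t * ln x)"

lemma
  assumes "l > 0" "t \<in> ball 0 \<delta>"
  shows set_integrable_kl_integrand: "set_integrable lborel {1..} (\<lambda>x. kl_integrand g l x t)"
    and set_integrable_kl_integrand_d1: "set_integrable lborel {1..} (\<lambda>x. kl_integrand_d1 g g1 l x t)"
    and set_integrable_kl_integrand_d2: "set_integrable lborel {1..} (\<lambda>x. kl_integrand_d2 g g1 g2 l x t)"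
    and kl_div_has_derivative: "(kl_div l has_real_derivative kl_div_d1 l t) (at t)"
    and kl_div_d1_has_derivative: "(kl_div_d1 l has_real_derivative kl_div_d2 l t) (at t)"
proof -
  have "diff_under_int (kl_integrand g l) (kl_integrand_d1 g g1 l) (ball 0 \<delta>)"
    and "diff_under_int (kl_integrand_d1 g g1 l) (kl_integrand_d2 g g1 g2 l) (ball 0 \<delta>)"
    using dui_kl dui_kl1 \<open>l > 0\<close> by auto
  with \<open>t \<in> ball 0 \<delta>\<close> show "set_integrable lborel {1..} (\<lambda>x. kl_integrand g l x t)"
    "set_integrable lborel {1..} (\<lambda>x. kl_integrand_d1 g g1 l x t)"
    "set_integrable lborel {1..} (\<lambda>x. kl_integrand_d2 g g1 g2 l x t)"
    "(kl_div l has_real_derivative kl_div_d1 l t) (at t)"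
    "(kl_div_d1 l has_real_derivative kl_div_d2 l t) (at t)"
    unfolding diff_under_int_def kl_div_def[abs_def] kl_div_d1_def[abs_def] kl_div_d2_def
    by blast+
qed

lemma int1_g1_eq_0:
  assumes "t \<in> ball 0 \<delta>"
  shows "int1 (\<lambda>x. g1 x t) = 0"
proof -
  have "((\<lambda>s. int1 (\<lambda>x. g x s)) has_real_derivative 0) (at t)"
    by (rule has_field_derivative_transform_within_open[of "\<lambda>_. 1" _ _ "ball 0 \<delta>"])
      (use assms g_density in auto)
  with dui_g assms show ?thesis
    unfolding diff_under_int_def by (metis DERIV_unique)
qed

lemma int1_g2_eq_0:
  assumes "t \<in> ball 0 \<delta>"
  shows "int1 (\<lambda>x. g2 x t) = 0"
proof -
  have "((\<lambda>s. int1 (\<lambda>x. g1 x s)) has_real_derivative 0) (at t)"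
    by (rule has_field_derivative_transform_within_open[of "\<lambda>_. 0" _ _ "ball 0 \<delta>"])
      (use assms int1_g1_eq_0 in auto)
  with dui_g1 assms show ?thesis
    unfolding diff_under_int_def by (metis DERIV_unique)
qed

lemma g1_0_eq_h: "x \<ge> 1 \<Longrightarrow> g1 x 0 = h x"
  using g1_deriv h_def delta_pos by (meson DERIV_unique centre_in_ball)

lemma ln_kl_ratio_shift:
  assumes "t \<in> ball 0 \<delta>" "x \<ge> 1" "l > 0"
  shows "ln (g x t / (l * x powr (-l-1))) = ln (g x t / (\<alpha> * x powr (-\<alpha>-1))) - ln (l / \<alpha>) + (l - \<alpha>) * ln x"
  using assms g_pos alpha_pos by (intro ln_pareto_ratio_shift) auto

lemma kl_div_shift:
  assumes "t \<in> ball 0 \<delta>" "l > 0"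
  shows "kl_div l t = kl_div \<alpha> t - ln (l / \<alpha>) + (l - \<alpha>) * mean_log t"
proof -
  have shift: "kl_integrand g k x t = kl_integrand g \<alpha> x t - ln (k / \<alpha>) * g x t + (k - \<alpha>) * (g x t * ln x)"
    if "k > 0" "x \<ge> 1" for k x
    unfolding kl_integrand_def ln_kl_ratio_shift[OF assms(1) that(2,1)] by (simp add: algebra_simps)
  have g_int: "set_integrable lborel {1..} (\<lambda>x. g x t)" and "int1 (\<lambda>x. g x t) = 1"
    using g_density assms(1) by auto
  from int1_pareto_shift(2)[of \<alpha> "\<lambda>k x. kl_integrand g k x t", OF alpha_pos
      set_integrable_kl_integrand[OF _ assms(1)] g_int shift, of l]
  show ?thesis
    using \<open>int1 (\<lambda>x. g x t) = 1\<close> assms(2) by (simp add: kl_div_def mean_log_def)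
qed

lemma kl_div_d1_shift_0:
  assumes "l > 0"
  shows "kl_div_d1 l 0 = kl_div_d1 \<alpha> 0 + (l - \<alpha>) * int1 (\<lambda>x. g1 x 0 * ln x)"
proof -
  have B0: "0 \<in> ball 0 \<delta>" using delta_pos by simp
  have shift: "kl_integrand_d1 g g1 k x 0
      = kl_integrand_d1 g g1 \<alpha> x 0 - ln (k / \<alpha>) * g1 x 0 + (k - \<alpha>) * (g1 x 0 * ln x)"
    if "k > 0" "x \<ge> 1" for k x
    unfolding kl_integrand_d1_def ln_kl_ratio_shift[OF B0 that(2,1)] by (simp add: algebra_simps)
  have g1_int: "set_integrable lborel {1..} (\<lambda>x. g1 x 0)"
    using dui_g B0 unfolding diff_under_int_def by blast
  from int1_pareto_shift(2)[of \<alpha> "\<lambda>k x. kl_integrand_d1 g g1 k x 0" "\<lambda>x. g1 x 0",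
      OF alpha_pos set_integrable_kl_integrand_d1[OF _ B0] g1_int shift, of l]
  show ?thesis
    using int1_g1_eq_0[OF B0] assms by (simp add: kl_div_d1_def)
qed

lemma kl_ratio_alpha_0: "x \<ge> 1 \<Longrightarrow> g x 0 / (\<alpha> * x powr (-\<alpha>-1)) = 1"
  using g_pareto alpha_pos by simp

lemma kl_div_alpha_0: "kl_div \<alpha> 0 = 0"
proof -
  have "kl_div \<alpha> 0 = int1 (\<lambda>_. 0)"
    unfolding kl_div_def int1_def
    by (rule set_lebesgue_integral_cong) (auto simp: kl_integrand_def kl_ratio_alpha_0)
  then show ?thesis by (simp add: int1_def)
qed

lemma kl_div_d1_alpha_0: "kl_div_d1 \<alpha> 0 = 0"
proof -
  have "kl_div_d1 \<alpha> 0 = int1 (\<lambda>x. g1 x 0)"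
    unfolding kl_div_d1_def int1_def
    by (rule set_lebesgue_integral_cong) (auto simp: kl_integrand_d1_def kl_ratio_alpha_0)
  then show ?thesis
    using delta_pos by (simp add: int1_g1_eq_0)
qed

lemma kl_div_d2_alpha_0: "kl_div_d2 \<alpha> 0 = int1 (\<lambda>x. x powr (\<alpha>+1) / \<alpha> * (h x)^2)"
proof -
  have B0: "0 \<in> ball 0 \<delta>" using delta_pos by simp
  have g2_int: "set_integrable lborel {1..} (\<lambda>x. g2 x 0)"
    using dui_g1 B0 unfolding diff_under_int_def by blast
  have fisher: "(g1 x 0)^2 / g x 0 = x powr (\<alpha>+1) / \<alpha> * (h x)^2" if "x \<ge> 1" for x
  proof -
    have "x powr (\<alpha>+1) * x powr (-\<alpha>-1) = 1"
      using that by (simp add: powr_add[symmetric])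
    then show ?thesis
      using that g_pareto g1_0_eq_h alpha_pos by (simp add: field_simps)
  qed
  have d2: "kl_integrand_d2 g g1 g2 \<alpha> x 0 = 1 * g2 x 0 + 1 * (x powr (\<alpha>+1) / \<alpha> * (h x)^2)"
    if "x \<ge> 1" for x
    using that by (simp add: kl_integrand_d2_def kl_ratio_alpha_0 fisher)
  have "set_integrable lborel {1..} (\<lambda>x. x powr (\<alpha>+1) / \<alpha> * (h x)^2)"
    by (rule int1_lincomb(1)[where a = 1 and b = "-1",
          OF set_integrable_kl_integrand_d2[OF alpha_pos B0] g2_int]) (simp add: d2)
  from int1_lincomb(2)[OF g2_int this d2] show ?thesis
    using int1_g2_eq_0[OF B0] by (simp add: kl_div_d2_def)
qed

lemma alpha_mean_log_0: "\<alpha> * mean_log 0 = 1"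
proof -
  have "mean_log 0 = int1 (\<lambda>x. \<alpha> * x powr (-\<alpha>-1) * ln x)"
    unfolding mean_log_def int1_def by (rule set_lebesgue_integral_cong) (use g_pareto in auto)
  then show ?thesis
    using int1_pareto_ln[OF alpha_pos] alpha_pos by simp
qed

lemma alpha_mean_log_has_derivative:
  assumes "t \<in> ball 0 \<delta>"
  shows "((\<lambda>s. \<alpha> * mean_log s) has_real_derivative kl_div_d1 (2 * \<alpha>) t - kl_div_d1 \<alpha> t) (at t)"
proof (rule has_field_derivative_transform_within_open[OF _ open_ball assms])
  show "((\<lambda>s. kl_div (2 * \<alpha>) s - kl_div \<alpha> s + ln 2) has_real_derivative
      kl_div_d1 (2 * \<alpha>) t - kl_div_d1 \<alpha> t) (at t)"
    using assms alpha_pos by (auto intro!: derivative_eq_intros kl_div_has_derivative)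
  show "kl_div (2 * \<alpha>) s - kl_div \<alpha> s + ln 2 = \<alpha> * mean_log s" if "s \<in> ball 0 \<delta>" for s
    using kl_div_shift[OF that, of "2 * \<alpha>"] alpha_pos by simp
qed

lemma alpha_mean_log_deriv_0:
  "kl_div_d1 (2 * \<alpha>) 0 - kl_div_d1 \<alpha> 0 = int1 (\<lambda>x. \<alpha> * h x * ln x)"
proof -
  have "int1 (\<lambda>x. \<alpha> * h x * ln x) = int1 (\<lambda>x. \<alpha> * (g1 x 0 * ln x))"
    unfolding int1_def by (rule set_lebesgue_integral_cong) (auto simp: g1_0_eq_h)
  then show ?thesis
    using kl_div_d1_shift_0[of "2 * \<alpha>"] alpha_pos by (simp add: int1_def)
qed

lemma KL_eq:
  assumes "t \<in> ball 0 \<delta>" "mean_log t > 0"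
  shows "KL g t = kl_div \<alpha> t + ln (\<alpha> * mean_log t) + 1 - \<alpha> * mean_log t"
proof -
  have "kl_div l t = kl_div \<alpha> t - ln (l / \<alpha>) + (l / \<alpha> - 1) * (\<alpha> * mean_log t)" if "l > 0" for l
    using kl_div_shift[OF assms(1) that] alpha_pos by (simp add: algebra_simps)
  then have "{int1 (\<lambda>x. kl_integrand g l x t) | l. l > 0}
      = {kl_div \<alpha> t - ln (l / \<alpha>) + (l / \<alpha> - 1) * (\<alpha> * mean_log t) | l. l > 0}"
    unfolding kl_div_def by force
  then show ?thesis
    unfolding KL_def using Inf_neg_ln_plus_linear alpha_pos assms(2) by simp
qed

lemma eventually_KL_eq:
  "\<forall>\<^sub>F t in at 0. KL g t = kl_div \<alpha> t + ln (\<alpha> * mean_log t) + 1 - \<alpha> * mean_log t"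
proof -
  have "isCont (\<lambda>t. \<alpha> * mean_log t) 0"
    using DERIV_isCont[OF alpha_mean_log_has_derivative[of 0]] delta_pos by simp
  then have "((\<lambda>t. \<alpha> * mean_log t) \<longlongrightarrow> 1) (at 0)"
    by (simp add: isCont_def alpha_mean_log_0)
  then have "\<forall>\<^sub>F t in at 0. mean_log t > 0"
    using order_tendstoD(1)[of _ 1 _ 0] alpha_pos
    by (fastforce elim: eventually_mono simp: zero_less_mult_iff)
  moreover have "\<forall>\<^sub>F t in at 0. t \<in> ball 0 \<delta>"
    using delta_pos by (intro eventually_at_in_open') auto
  ultimately show ?thesis
    by eventually_elim (rule KL_eq)
qed

lemma KL_profile_expansion:
  "(\<lambda>t. kl_div \<alpha> t + ln (\<alpha> * mean_log t) + 1 - \<alpha> * mean_log t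
      - (int1 (\<lambda>x. x powr (\<alpha>+1) / \<alpha> * (h x)^2) - (int1 (\<lambda>x. \<alpha> * h x * ln x))^2) / 2 * t^2)
    \<in> o[at 0](\<lambda>t. t^2)"
proof -
  have ball: "\<forall>\<^sub>F t in nhds 0. t \<in> ball 0 \<delta>"
    using delta_pos by (intro eventually_nhds_in_open) auto
  have B0: "0 \<in> ball 0 \<delta>"
    using delta_pos by simp
  have "(\<lambda>t. kl_div \<alpha> t + ln (\<alpha> * mean_log t) + 1 - \<alpha> * mean_log t
      - (kl_div_d2 \<alpha> 0 - (kl_div_d1 (2 * \<alpha>) 0 - kl_div_d1 \<alpha> 0)^2) / 2 * t^2) \<in> o[at 0](\<lambda>t. t^2)"
  proof (rule ln_profile_second_order[where N = "\<lambda>t. \<alpha> * mean_log t"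
        and N' = "\<lambda>t. kl_div_d1 (2 * \<alpha>) t - kl_div_d1 \<alpha> t"])
    show "\<forall>\<^sub>F t in nhds 0. (kl_div \<alpha> has_real_derivative kl_div_d1 \<alpha> t) (at t)"
      using ball by eventually_elim (rule kl_div_has_derivative[OF alpha_pos])
    show "(kl_div_d1 \<alpha> has_real_derivative kl_div_d2 \<alpha> 0) (at 0)"
      by (rule kl_div_d1_has_derivative[OF alpha_pos B0])
    show "\<forall>\<^sub>F t in nhds 0. ((\<lambda>t. \<alpha> * mean_log t) has_real_derivative
        kl_div_d1 (2 * \<alpha>) t - kl_div_d1 \<alpha> t) (at t)"
      using ball by eventually_elim (rule alpha_mean_log_has_derivative)
    show "((\<lambda>t. kl_div_d1 (2 * \<alpha>) t - kl_div_d1 \<alpha> t) has_real_derivative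
        kl_div_d2 (2 * \<alpha>) 0 - kl_div_d2 \<alpha> 0) (at 0)"
      using alpha_pos B0 by (intro DERIV_diff kl_div_d1_has_derivative) auto
  qed (simp_all add: kl_div_alpha_0 kl_div_d1_alpha_0 alpha_mean_log_0)
  then show ?thesis
    by (simp add: kl_div_d2_alpha_0 alpha_mean_log_deriv_0)
qed

end

theorem lemma3:
  fixes g g1 g2 :: "real \<Rightarrow> real \<Rightarrow> real" and h :: "real \<Rightarrow> real"
    and \<alpha> \<delta> :: real
  assumes alpha_pos: "\<alpha> > 0" and delta_pos: "\<delta> > 0"
    and g_pos: "\<forall>t\<in>ball 0 \<delta>. \<forall>x\<ge>1. g x t > 0"
    and g_density: "\<forall>t\<in>ball 0 \<delta>. set_integrable lborel {1..} (\<lambda>x. g x t) \<and> int1 (\<lambda>x. g x t) = 1"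
    and g_pareto: "\<forall>x\<ge>1. g x 0 = \<alpha> * x powr (-\<alpha>-1)"
    and g1_deriv: "\<forall>t\<in>ball 0 \<delta>. \<forall>x\<ge>1. ((\<lambda>s. g x s) has_real_derivative g1 x t) (at t)"
    and g2_deriv: "\<forall>t\<in>ball 0 \<delta>. \<forall>x\<ge>1. ((\<lambda>s. g1 x s) has_real_derivative g2 x t) (at t)"
    and h_def: "\<forall>x\<ge>1. ((\<lambda>s. g x s) has_real_derivative h x) (at 0)"
    and dui_g: "diff_under_int g g1 (ball 0 \<delta>)"
    and dui_g1: "diff_under_int g1 g2 (ball 0 \<delta>)"
    and dui_kl: "\<forall>l>0. diff_under_int (kl_integrand g l) (kl_integrand_d1 g g1 l) (ball 0 \<delta>)"
    and dui_kl1: "\<forall>l>0. diff_under_int (kl_integrand_d1 g g1 l) (kl_integrand_d2 g g1 g2 l) (ball 0 \<delta>)"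
  shows "(\<lambda>t. 2 * KL g t
            - t^2 * (int1 (\<lambda>x. x powr (\<alpha>+1) / \<alpha> * (h x)^2)
                     - (int1 (\<lambda>x. \<alpha> * h x * ln x))^2))
         \<in> o[at 0](\<lambda>t. t^2)"
proof -
  interpret pareto_perturbation g g1 g2 h \<alpha> \<delta>
    by unfold_locales (fact assms)+
  let ?c = "int1 (\<lambda>x. x powr (\<alpha>+1) / \<alpha> * (h x)^2) - (int1 (\<lambda>x. \<alpha> * h x * ln x))^2"
  let ?K = "\<lambda>t. kl_div \<alpha> t + ln (\<alpha> * mean_log t) + 1 - \<alpha> * mean_log t"
  have expansion: "(\<lambda>t. 2 * (?K t - ?c / 2 * t^2)) \<in> o[at 0](\<lambda>t. t^2)"
    using KL_profile_expansion by (subst landau_o.small.cmult_in_iff) simp_all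
  have "\<forall>\<^sub>F t in at 0. 2 * (?K t - ?c / 2 * t^2) = 2 * KL g t - t^2 * ?c"
    using eventually_KL_eq by eventually_elim simp
  from landau_o.small.in_cong[OF this] expansion show ?thesis
    by blast
qed

end
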